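(* Let $m\in\mathbb N$, $b>0$, $\tau>\gamma_0$, let $\mathcal S=\{n(N)\}_{N=1}^\infty$ be an increasing sequence of positive integers, and let $(D_n)_{n\in\mathcal S}$ be positive constants (depending on $b,\tau,m$ but not on the functions below) such that $$\lim_{N\to\infty}D_{n(N)}e^{n(N)\psi(\tau)}=0.$$ For $n\in\mathcal S$ put $\sigma=\sigma_n:=n/(mb\tau)$. Then for every $\gamma>0$ there exist a constant $C=C(b,\tau,m,\gamma)$ and an integer $n_0=n_0(b,\tau,m,\gamma)$ such that for every $n\in\mathcal S$ with $n\ge n_0$ there is a finite set $\{X_1,\dots,X_\Lambda\}\subset Q^m_b$ with $\Lambda\le Cn^m$ such that $$\|f\|_{L_\infty(Q^m_b)}\le(1+\gamma)\max_{1\le j\le\Lambda}|f(X_j)|$$ for every entire function $f:\mathbb C^m\to\mathbb C$ satisfying $|f(w)|\le D_n\|f\|_{L_\infty(Q^m_b)}\exp(\sigma_n\sum_{j=1}^m|w_j|)$ for all $w\in\mathbb C^m$.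
   Context: $Q^m_b=\{x\in\mathbb R^m:\max_j|x_j|\le b\}$. $\psi(\tau):=\frac{\sqrt{1+\tau^2}}{\tau}-\log(\tau+\sqrt{1+\tau^2})$ for $\tau>0$; $\psi$ is strictly decreasing with a unique positive zero $\gamma_0=1.5088\ldots$, and $\psi(\tau)<0$ for $\tau>\gamma_0$. *)

theory Defs
  imports "HOL-Analysis.Analysis"
begin

definition psi :: "real \<Rightarrow> real" where
  "psi t = sqrt (1 + t\<^sup>2) / t - ln (t + sqrt (1 + t\<^sup>2))"

definition gamma0 :: real where
  "gamma0 = (THE g. g > 0 \<and> psi g = 0)"

definition cubeQ :: "real \<Rightarrow> (real^'m) set" where
  "cubeQ b = {x. \<forall>j. \<bar>x $ j\<bar> \<le> b}"

definition cembed :: "real^'m \<Rightarrow> complex^'m" where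
  "cembed x = (\<chi> j. complex_of_real (x $ j))"

text \<open>Entire function on C^m: complex (Frechet) differentiable at every point,
  i.e. the derivative is complex-linear.\<close>
definition entire_fun :: "(complex^'m \<Rightarrow> complex) \<Rightarrow> bool" where
  "entire_fun f \<longleftrightarrow> (\<forall>z. \<exists>L. (f has_derivative L) (at z) \<and>
      (\<forall>c v. L (c *s v) = c * L v))"

definition supQ :: "real \<Rightarrow> (complex^'m \<Rightarrow> complex) \<Rightarrow> real" where
  "supQ b f = Sup ((\<lambda>x. cmod (f (cembed x))) ` cubeQ b)"

end

theory Submission
  imports Defs "HOL-Complex_Analysis.Conformal_Mappings"
begin

(*
  Substituting x = b cos \<theta> turns f into a 2\<pi>-periodic function of \<theta> \<in> \<real>^m.  Along each
  coordinate, z \<mapsto> f(\<dots>, b cos z, \<dots>) is entire, bounded by \<parallel>f\<parallel> = supQ b f on the real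
  axis, and on the strip \<bar>Im z\<bar> \<le> 1 (where \<bar>b cos z\<bar> \<le> 3b) the growth hypothesis bounds it
  by \<parallel>f\<parallel> e^(K n), because D_n e^(n \<psi>(\<tau>)) \<rightarrow> 0 forces D_n \<le> e^(\<bar>\<psi>(\<tau>)\<bar> n) eventually.
  The three-lines theorem on the narrower strip \<bar>Im z\<bar> \<le> 1/n and Cauchy's estimate make
  \<theta> \<mapsto> f(b cos \<theta>) Lipschitz with constant m e^K n \<parallel>f\<parallel> in the sup norm.  So a grid in \<theta> of
  mesh \<delta> = h/n, that is O(n^m) points, reproduces \<parallel>f\<parallel> up to the factor 1 - m e^K n \<delta>,
  which h turns into 1/(1 + \<gamma>).
*)

section \<open>The function psi\<close>

lemma psi_strict_antimono:
  assumes "0 < s" "s < t"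
  shows "psi t < psi s"
proof -
  have first_term: "sqrt (1 + u\<^sup>2) / u = sqrt (1 / u\<^sup>2 + 1)" if "u > 0" for u :: real
  proof -
    have "sqrt (1 / u\<^sup>2 + 1) = sqrt ((1 + u\<^sup>2) / u\<^sup>2)"
      using that by (simp add: add_divide_distrib)
    also have "\<dots> = sqrt (1 + u\<^sup>2) / u"
      using that by (simp add: real_sqrt_divide)
    finally show ?thesis by simp
  qed
  have "1 / t\<^sup>2 < 1 / s\<^sup>2" using assms by (simp add: divide_strict_left_mono power_strict_mono)
  then have "sqrt (1 + t\<^sup>2) / t < sqrt (1 + s\<^sup>2) / s" using assms first_term by simp
  moreover have "s + sqrt (1 + s\<^sup>2) \<le> t + sqrt (1 + t\<^sup>2)"
    using assms by (intro add_mono) (auto intro: power_mono)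
  then have "ln (s + sqrt (1 + s\<^sup>2)) \<le> ln (t + sqrt (1 + t\<^sup>2))"
    using assms by (subst ln_le_cancel_iff) (auto intro: add_pos_nonneg)
  ultimately show ?thesis unfolding psi_def by linarith
qed

lemma psi_1_nonneg: "psi 1 \<ge> 0"
  using ln_le_minus_one[of "1 + sqrt 2"] by (simp add: psi_def add_pos_nonneg)

lemma psi_10_nonpos: "psi 10 \<le> 0"
proof -
  have "exp (2::real) \<le> 10"
    using exp_add[of "1::real" 1] mult_mono[OF exp_le exp_le] by simp
  then have "2 \<le> ln (10::real)" by (simp add: ln_ge_iff)
  also have "ln 10 \<le> ln (10 + sqrt (1 + 10\<^sup>2::real))" by (simp add: add_pos_nonneg)
  finally have "2 \<le> ln (10 + sqrt (1 + 10\<^sup>2::real))" .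
  moreover have "sqrt (1 + 10\<^sup>2) \<le> (20::real)"
    by (rule real_le_lsqrt) auto
  ultimately show ?thesis unfolding psi_def by simp
qed

lemma continuous_on_psi: "continuous_on {0<..} psi"
  unfolding psi_def
  by (intro continuous_intros) (auto simp: add_nonneg_eq_0_iff)

lemma gamma0_pos: "gamma0 > 0"
proof -
  have "continuous_on {1..10} psi"
    by (rule continuous_on_subset[OF continuous_on_psi]) auto
  then obtain g where g: "1 \<le> g" "g \<le> 10" "psi g = 0"
    using IVT2'[of psi 10 0 1, OF psi_10_nonpos psi_1_nonneg] by auto
  have "\<exists>!g. g > 0 \<and> psi g = 0"
  proof (rule ex1I)
    show "g > 0 \<and> psi g = 0" using g by simp
    show "h = g" if "h > 0 \<and> psi h = 0" for h
    proof (rule ccontr)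
      assume "h \<noteq> g"
      then have "h < g \<or> g < h" by linarith
      then show False using psi_strict_antimono[of h g] psi_strict_antimono[of g h] that g by auto
    qed
  qed
  from theI'[OF this] show ?thesis unfolding gamma0_def by (rule conjunct1)
qed

section \<open>Periodic entire functions in a strip\<close>

lemma periodic_add_of_int_mult:
  fixes g :: "complex \<Rightarrow> 'a"
  assumes per: "\<And>z. g (z + of_real p) = g z"
  shows "g (z + of_int l * of_real p) = g z"
proof -
  have nat: "g (z + of_nat n * of_real p) = g z" for n z
  proof (induction n)
    case (Suc n)
    then show ?case using per[of "z + of_nat n * of_real p"] by (simp add: algebra_simps)
  qed simp
  show ?thesis
  proof (cases "l \<ge> 0")
    case True
    then show ?thesis using nat[of z "nat l"] by simp
  next
    case False
    then show ?thesis using nat[of "z + of_int l * of_real p" "nat (- l)"] by simp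
  qed
qed

lemma periodic_norm_attains_max_on_strip:
  fixes \<phi> :: "complex \<Rightarrow> complex"
  assumes cont: "continuous_on UNIV \<phi>"
    and per: "\<And>z. norm (\<phi> (z + of_real (2*pi))) = norm (\<phi> z)"
  obtains z0 where "0 \<le> Im z0" "Im z0 \<le> 1"
    "\<And>w. 0 \<le> Im w \<Longrightarrow> Im w \<le> 1 \<Longrightarrow> norm (\<phi> w) \<le> norm (\<phi> z0)"
proof -
  define R where "R = cbox 0 (Complex (2*pi) 1)"
  have R: "z \<in> R \<longleftrightarrow> 0 \<le> Re z \<and> Re z \<le> 2*pi \<and> 0 \<le> Im z \<and> Im z \<le> 1" for z
    by (simp add: R_def cbox_complex_eq)
  have "R \<noteq> {}" using R[of 0] by auto
  then obtain z0 where z0: "z0 \<in> R" and max: "\<And>w. w \<in> R \<Longrightarrow> norm (\<phi> w) \<le> norm (\<phi> z0)"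
    using continuous_attains_sup[of R "\<lambda>z. norm (\<phi> z)"] cont
    by (auto simp: R_def intro: continuous_on_norm continuous_on_subset)
  have "norm (\<phi> w) \<le> norm (\<phi> z0)" if "0 \<le> Im w" "Im w \<le> 1" for w
  proof -
    define l where "l = \<lfloor>Re w / (2*pi)\<rfloor>"
    define w' where "w' = w + of_int (- l) * of_real (2*pi)"
    have "of_int l * (2*pi) \<le> Re w" "Re w < of_int l * (2*pi) + 2*pi"
      using floor_divide_lower[of "2*pi" "Re w"] floor_divide_upper[of "2*pi" "Re w"]
      by (simp_all add: l_def algebra_simps)
    then have "w' \<in> R" using that by (simp add: R w'_def)
    moreover have "norm (\<phi> w') = norm (\<phi> w)"
      unfolding w'_def by (rule periodic_add_of_int_mult[of "\<lambda>z. norm (\<phi> z)"]) (rule per)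
    ultimately show ?thesis using max by fastforce
  qed
  then show thesis using z0 by (intro that[of z0]) (auto simp: R)
qed

lemma periodic_strip_maximum_principle:
  fixes \<phi> :: "complex \<Rightarrow> complex"
  assumes hol: "\<phi> holomorphic_on UNIV"
    and per: "\<And>z. norm (\<phi> (z + of_real (2*pi))) = norm (\<phi> z)"
    and bottom: "\<And>x. norm (\<phi> (of_real x)) \<le> M"
    and top: "\<And>x. norm (\<phi> (Complex x 1)) \<le> M"
    and "0 \<le> Im z" "Im z \<le> 1"
  shows "norm (\<phi> z) \<le> M"
proof -
  obtain z0 where z0: "0 \<le> Im z0" "Im z0 \<le> 1"
    and max: "\<And>w. 0 \<le> Im w \<Longrightarrow> Im w \<le> 1 \<Longrightarrow> norm (\<phi> w) \<le> norm (\<phi> z0)"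
    using periodic_norm_attains_max_on_strip[OF holomorphic_on_imp_continuous_on[OF hol] per]
    by blast
  have "norm (\<phi> z0) \<le> M"
  proof -
    consider "Im z0 = 0" | "Im z0 = 1" | "0 < Im z0" "Im z0 < 1" using z0 by linarith
    then show ?thesis
    proof cases
      case 1
      then have "z0 = of_real (Re z0)" by (simp add: complex_eq_iff)
      then show ?thesis using bottom by metis
    next
      case 2
      then have "z0 = Complex (Re z0) 1" by (simp add: complex_eq_iff)
      then show ?thesis using top by metis
    next
      case 3
      define U where "U = {z. 0 < Im z} \<inter> {z. Im z < 1}"
      have "open U" unfolding U_def
        by (intro open_Int open_halfspace_Im_gt open_halfspace_Im_lt)
      moreover have "z0 \<in> U" using 3 by (simp add: U_def)
      ultimately have "\<phi> constant_on UNIV"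
        by (intro maximum_modulus_principle[OF hol open_UNIV connected_UNIV, of U z0])
           (auto simp: U_def intro!: max)
      then have "\<phi> z0 = \<phi> 0" by (auto simp: constant_on_def)
      then show ?thesis using bottom[of 0] by simp
    qed
  qed
  then show ?thesis using max assms by fastforce
qed

text \<open>Multiplying by \<open>exp (\<i> L z)\<close> equalises the bounds on the two boundary lines.\<close>
lemma periodic_three_lines:
  fixes g :: "complex \<Rightarrow> complex"
  assumes hol: "g holomorphic_on UNIV"
    and per: "\<And>z. g (z + of_real (2*pi)) = g z"
    and bottom: "\<And>x. norm (g (of_real x)) \<le> M"
    and top: "\<And>x. norm (g (Complex x 1)) \<le> M * exp L"
    and "0 \<le> Im z" "Im z \<le> 1"
  shows "norm (g z) \<le> M * exp (L * Im z)"
proof -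
  define \<phi> where "\<phi> z = g z * exp (\<i> * of_real L * z)" for z
  have norm_\<phi>: "norm (\<phi> z) = norm (g z) * exp (- (L * Im z))" for z
    by (simp add: \<phi>_def norm_mult)
  have "norm (\<phi> z) \<le> M"
  proof (rule periodic_strip_maximum_principle[where \<phi> = \<phi>])
    show "\<phi> holomorphic_on UNIV" unfolding \<phi>_def by (intro holomorphic_intros hol)
    show "norm (\<phi> (z + of_real (2*pi))) = norm (\<phi> z)" for z
      by (simp only: norm_\<phi> per) simp
    show "norm (\<phi> (of_real x)) \<le> M" for x using bottom[of x] by (simp add: norm_\<phi>)
    show "norm (\<phi> (Complex x 1)) \<le> M" for x
      using top[of x] by (simp add: norm_\<phi> exp_minus field_simps)
  qed (use assms in auto)
  then show ?thesis by (simp add: norm_\<phi> exp_minus field_simps)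
qed

lemma periodic_strip_growth:
  fixes g :: "complex \<Rightarrow> complex"
  assumes hol: "g holomorphic_on UNIV"
    and per: "\<And>z. g (z + of_real (2*pi)) = g z"
    and real_line: "\<And>x. norm (g (of_real x)) \<le> M"
    and strip: "\<And>z. \<bar>Im z\<bar> \<le> 1 \<Longrightarrow> norm (g z) \<le> M * exp L"
    and "\<bar>Im z\<bar> \<le> 1"
  shows "norm (g z) \<le> M * exp (L * \<bar>Im z\<bar>)"
proof (cases "Im z \<ge> 0")
  case True
  then show ?thesis
    using periodic_three_lines[OF hol per real_line, of L z] strip assms(5) by auto
next
  case False
  have "norm (g (- (- z))) \<le> M * exp (L * Im (- z))"
  proof (rule periodic_three_lines[where g = "\<lambda>z. g (- z)"])
    have "(g \<circ> uminus) holomorphic_on UNIV"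
      by (rule holomorphic_on_compose_gen[of uminus UNIV g UNIV])
         (auto intro: holomorphic_intros hol)
    then show "(\<lambda>z. g (- z)) holomorphic_on UNIV" by (simp add: o_def)
    show "g (- (w + of_real (2*pi))) = g (- w)" for w
      using per[of "- (w + of_real (2*pi))"] by simp
    show "norm (g (- of_real x)) \<le> M" for x using real_line[of "- x"] by simp
    show "norm (g (- Complex x 1)) \<le> M * exp L" for x using strip[of "- Complex x 1"] by simp
  qed (use False assms(5) in auto)
  then show ?thesis using False by simp
qed

text \<open>Cauchy's estimate on discs of radius \<open>r\<close> centred on the real line bounds the derivative.\<close>
lemma holomorphic_Lipschitz_on_Reals:
  fixes g :: "complex \<Rightarrow> complex"
  assumes hol: "g holomorphic_on UNIV" and "r > 0"
    and bound: "\<And>z. \<bar>Im z\<bar> \<le> r \<Longrightarrow> norm (g z) \<le> B"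
  shows "norm (g (of_real t) - g (of_real t')) \<le> B / r * \<bar>t - t'\<bar>"
proof -
  have "norm (deriv g z) \<le> B / r" if "z \<in> \<real>" for z
  proof -
    have "norm ((deriv ^^ 1) g z) \<le> fact 1 * B / r ^ 1"
    proof (rule Cauchy_inequality)
      show "g holomorphic_on ball z r" using hol holomorphic_on_subset by blast
      show "continuous_on (cball z r) g"
        using holomorphic_on_imp_continuous_on[OF hol] continuous_on_subset by blast
      fix w assume w: "norm (z - w) = r"
      have "\<bar>Im w\<bar> = \<bar>Im (z - w)\<bar>" using that by (simp add: complex_is_Real_iff)
      also have "\<dots> \<le> r" using abs_Im_le_cmod w by metis
      finally show "norm (g w) \<le> B" by (rule bound)
    qed fact
    then show ?thesis by simp
  qed
  then have "norm (g (of_real t) - g (of_real t'))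
      \<le> B / r * norm (of_real t - of_real t' :: complex)"
    by (intro field_differentiable_bound[OF convex_Reals]) (auto intro: holomorphic_derivI[OF hol])
  then show ?thesis by (simp flip: of_real_diff)
qed

text \<open>A Bernstein-type inequality: by the three-lines bound, the growth \<open>exp (K k)\<close> on the unit
  strip becomes \<open>exp K\<close> on the strip \<open>\<bar>Im z\<bar> \<le> 1/k\<close>, whose width then gives the factor \<open>k\<close>.\<close>
lemma periodic_Lipschitz_on_Reals:
  fixes g :: "complex \<Rightarrow> complex" and M K k :: real
  assumes hol: "g holomorphic_on UNIV" and per: "\<And>z. g (z + of_real (2*pi)) = g z"
    and real_line: "\<And>x. norm (g (of_real x)) \<le> M"
    and strip: "\<And>z. \<bar>Im z\<bar> \<le> 1 \<Longrightarrow> norm (g z) \<le> M * exp (K * k)"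
    and "K \<ge> 0" and "k \<ge> 1"
  shows "norm (g (of_real t) - g (of_real t')) \<le> M * exp K * k * \<bar>t - t'\<bar>"
proof -
  have "M \<ge> 0" using real_line[of 0] norm_ge_zero order_trans by blast
  have "norm (g z) \<le> M * exp K" if "\<bar>Im z\<bar> \<le> 1 / k" for z
  proof -
    have "\<bar>Im z\<bar> \<le> 1" using that \<open>k \<ge> 1\<close> by (simp add: order_trans)
    then have "norm (g z) \<le> M * exp (K * k * \<bar>Im z\<bar>)"
      using periodic_strip_growth[OF hol per real_line strip] by blast
    also have "\<dots> \<le> M * exp K"
    proof -
      have "K * (k * \<bar>Im z\<bar>) \<le> K * 1"
        using that \<open>K \<ge> 0\<close> \<open>k \<ge> 1\<close> by (intro mult_left_mono) (auto simp: field_simps)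
      then show ?thesis using \<open>M \<ge> 0\<close> by (intro mult_left_mono) (auto simp: mult.assoc)
    qed
    finally show ?thesis .
  qed
  then have "norm (g (of_real t) - g (of_real t')) \<le> M * exp K / (1 / k) * \<bar>t - t'\<bar>"
    using \<open>k \<ge> 1\<close> by (intro holomorphic_Lipschitz_on_Reals[OF hol]) auto
  then show ?thesis by simp
qed

section \<open>The substitution x = b cos theta\<close>

lemma entire_fun_slice_holomorphic:
  fixes f :: "complex^'m \<Rightarrow> complex"
  assumes "entire_fun f"
  shows "(\<lambda>z. f (z *s e + c)) holomorphic_on UNIV"
proof -
  have "(\<lambda>z. f (z *s e + c)) field_differentiable at z" for z
  proof -
    obtain L where L: "(f has_derivative L) (at (z *s e + c))" "\<And>a v. L (a *s v) = a * L v"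
      using assms unfolding entire_fun_def by blast
    have "linear (\<lambda>a::complex. a *s e)"
      by (rule linearI) (simp_all add: vec_eq_iff vector_scalar_mult_def algebra_simps)
    then have "((\<lambda>z. z *s e + c) has_derivative (\<lambda>a. a *s e)) (at z)"
      using bounded_linear_imp_has_derivative[of "\<lambda>a::complex. a *s e"]
      by (intro has_derivative_add_const) (simp add: linear_linear)
    from has_derivative_compose[OF this L(1)]
    have "((\<lambda>z. f (z *s e + c)) has_derivative (\<lambda>a. L e * a)) (at z)"
      by (simp add: o_def L(2) mult.commute)
    then show ?thesis
      unfolding field_differentiable_def has_field_derivative_def by blast
  qed
  then show ?thesis
    by (simp add: holomorphic_on_def field_differentiable_at_within)
qed

lemma norm_le_supQ:
  fixes f :: "complex^'m \<Rightarrow> complex"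
  assumes "entire_fun f" and "x \<in> cubeQ b"
  shows "cmod (f (cembed x)) \<le> supQ b f"
proof -
  have "isCont f z" for z
    using assms(1) has_derivative_continuous unfolding entire_fun_def by blast
  then have "continuous_on UNIV f"
    by (simp add: continuous_at_imp_continuous_on)
  moreover have "continuous_on UNIV (cembed :: real^'m \<Rightarrow> complex^'m)"
    unfolding cembed_def by (intro continuous_intros)
  ultimately have "continuous_on UNIV (f \<circ> cembed)"
    by (metis continuous_on_compose continuous_on_subset subset_UNIV)
  then have "continuous_on (cubeQ b) (\<lambda>x. cmod (f (cembed x)))"
    unfolding o_def by (intro continuous_on_norm) (rule continuous_on_subset, auto)
  moreover have "compact (cubeQ b :: (real^'m) set)"
  proof -
    have "(cubeQ b :: (real^'m) set) = cbox (\<chi> i. - b) (\<chi> i. b)"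
      by (auto simp: cubeQ_def mem_box_cart abs_le_iff minus_le_iff)
    then show ?thesis by (simp only: compact_cbox)
  qed
  ultimately have "bounded ((\<lambda>x. cmod (f (cembed x))) ` cubeQ b)"
    by (metis compact_continuous_image compact_imp_bounded)
  then show ?thesis
    unfolding supQ_def using assms(2) by (intro cSup_upper bounded_imp_bdd_above) auto
qed

lemma cos_vector_in_cubeQ:
  assumes "b \<ge> 0"
  shows "(\<chi> i. b * cos (\<theta> $ i)) \<in> cubeQ b"
  using assms by (auto simp: cubeQ_def abs_mult intro!: mult_left_le)

lemma supQ_nonneg:
  assumes "entire_fun f" and "b \<ge> 0"
  shows "supQ b f \<ge> 0"
  using norm_le_supQ[OF assms(1) cos_vector_in_cubeQ[OF assms(2)]] norm_ge_zero order_trans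
  by blast

lemma norm_cos_le_exp_abs_Im: "norm (cos (z::complex)) \<le> exp \<bar>Im z\<bar>"
proof -
  have "norm (cos z) \<le> (norm (exp (\<i> * z)) + norm (exp (- (\<i> * z)))) / 2"
    unfolding cos_exp_eq
    by (metis norm_divide norm_numeral norm_triangle_ineq divide_right_mono zero_le_numeral)
  also have "\<dots> = (exp (- Im z) + exp (Im z)) / 2" by simp
  also have "\<dots> \<le> exp \<bar>Im z\<bar>" by (cases "Im z \<ge> 0") auto
  finally show ?thesis .
qed

lemma complex_cos_add_2pi: "cos (z + of_real (2*pi)) = cos (z::complex)"
  by (simp add: cos_add flip: cos_of_real sin_of_real)

lemma norm_diff_le_of_coordinatewise_Lipschitz:
  fixes F :: "real^'m \<Rightarrow> 'a::real_normed_vector" and K \<delta> :: real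
  assumes "K \<ge> 0"
    and coordinate:
      "\<And>\<theta> j t. norm (F \<theta> - F (\<chi> i. if i = j then t else \<theta> $ i)) \<le> K * \<bar>\<theta> $ j - t\<bar>"
    and close: "\<And>i. \<bar>\<theta> $ i - \<phi> $ i\<bar> \<le> \<delta>"
  shows "norm (F \<theta> - F \<phi>) \<le> CARD('m) * K * \<delta>"
proof -
  have "norm (F \<theta> - F (\<chi> i. if i \<in> S then \<phi> $ i else \<theta> $ i)) \<le> card S * K * \<delta>"
    if "finite S" for S :: "'m set"
    using that
  proof (induction S rule: finite_induct)
    case (insert j S)
    define a where "a = (\<chi> i. if i \<in> S then \<phi> $ i else \<theta> $ i)"
    have a_upd: "(\<chi> i. if i \<in> insert j S then \<phi> $ i else \<theta> $ i)
        = (\<chi> i. if i = j then \<phi> $ j else a $ i)"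
      by (simp add: vec_eq_iff a_def)
    have "a $ j = \<theta> $ j" using insert(2) by (simp add: a_def)
    then have "K * \<bar>a $ j - \<phi> $ j\<bar> \<le> K * \<delta>"
      using close[of j] \<open>K \<ge> 0\<close> by (simp add: mult_left_mono)
    then have "norm (F a - F (\<chi> i. if i = j then \<phi> $ j else a $ i)) \<le> K * \<delta>"
      using coordinate[of a j "\<phi> $ j"] by linarith
    with insert(3) have "norm (F \<theta> - F (\<chi> i. if i \<in> insert j S then \<phi> $ i else \<theta> $ i))
        \<le> card S * K * \<delta> + K * \<delta>"
      unfolding a_upd a_def[symmetric] by (rule norm_diff_triangle_le)
    then show ?case using insert(1,2) by (simp add: algebra_simps)
  qed simp
  from this[of UNIV] show ?thesis by simp
qed

definition cos_pullback :: "real \<Rightarrow> (complex^'m \<Rightarrow> complex) \<Rightarrow> real^'m \<Rightarrow> complex" where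
  "cos_pullback b f \<theta> = f (cembed (\<chi> i. b * cos (\<theta> $ i)))"

lemma cos_pullback_coordinate_Lipschitz:
  fixes f :: "complex^'m \<Rightarrow> complex" and K k :: real
  assumes "b > 0" and ent: "entire_fun f" and "K \<ge> 0" and "k \<ge> 1"
    and cube: "\<And>x. x \<in> cubeQ b \<Longrightarrow> cmod (f (cembed x)) \<le> M"
    and box: "\<And>w. \<forall>i. cmod (w $ i) \<le> 3 * b \<Longrightarrow> cmod (f w) \<le> M * exp (K * k)"
  shows "norm (cos_pullback b f \<theta> - cos_pullback b f (\<chi> i. if i = j then t else \<theta> $ i))
    \<le> M * exp K * k * \<bar>\<theta> $ j - t\<bar>"
proof -
  define e :: "complex^'m" where "e = (\<chi> i. if i = j then 1 else 0)"
  define c :: "complex^'m" where "c = (\<chi> i. if i = j then 0 else of_real (b * cos (\<theta> $ i)))"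
  define g where "g z = f ((of_real b * cos z) *s e + c)" for z
  have g_of_real: "g (of_real s) = cos_pullback b f (\<chi> i. if i = j then s else \<theta> $ i)" for s
    unfolding g_def cos_pullback_def
    by (rule arg_cong[where f = f]) (simp add: vec_eq_iff cembed_def c_def e_def cos_of_real)
  have "((\<lambda>z. f (z *s e + c)) \<circ> (\<lambda>z. of_real b * cos z)) holomorphic_on UNIV"
    by (intro holomorphic_on_compose holomorphic_intros
        holomorphic_on_subset[OF entire_fun_slice_holomorphic[OF ent]]) auto
  then have hol: "g holomorphic_on UNIV" by (simp add: g_def [abs_def] o_def)
  have per: "g (z + of_real (2*pi)) = g z" for z
    by (simp only: g_def complex_cos_add_2pi)
  have real_line: "norm (g (of_real s)) \<le> M" for s
    unfolding g_of_real cos_pullback_def using \<open>b > 0\<close> by (intro cube cos_vector_in_cubeQ) simp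
  have strip: "norm (g z) \<le> M * exp (K * k)" if "\<bar>Im z\<bar> \<le> 1" for z
    unfolding g_def
  proof (rule box, rule allI)
    fix i
    have "cmod (of_real b * cos z) \<le> b * exp 1"
      using norm_cos_le_exp_abs_Im[of z] that \<open>b > 0\<close> by (simp add: norm_mult order_trans)
    also have "\<dots> \<le> 3 * b" using exp_le \<open>b > 0\<close> by simp
    finally have "cmod (of_real b * cos z) \<le> 3 * b" .
    moreover have "\<bar>cos (\<theta> $ i)\<bar> \<le> 3" using abs_cos_le_one[of "\<theta> $ i"] by linarith
    then have "\<bar>b * cos (\<theta> $ i)\<bar> \<le> 3 * b" using \<open>b > 0\<close> by (simp add: abs_mult)
    ultimately show "cmod (((of_real b * cos z) *s e + c) $ i) \<le> 3 * b"
      using \<open>b > 0\<close> by (simp add: e_def c_def vector_scalar_mult_def norm_mult abs_mult)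
  qed
  have "\<theta> = (\<chi> i. if i = j then \<theta> $ j else \<theta> $ i)" by (simp add: vec_eq_iff)
  then have "cos_pullback b f \<theta> = g (of_real (\<theta> $ j))" by (simp add: g_of_real)
  then show ?thesis
    using periodic_Lipschitz_on_Reals[OF hol per real_line strip \<open>K \<ge> 0\<close> \<open>k \<ge> 1\<close>]
    by (simp add: g_of_real)
qed

section \<open>Sampling sets\<close>

definition cos_grid :: "real \<Rightarrow> real \<Rightarrow> (real^'m) set" where
  "cos_grid b \<delta> = (\<lambda>l. \<chi> i. b * cos (\<delta> * real (l i))) ` PiE UNIV (\<lambda>_. {..nat \<lceil>pi / \<delta>\<rceil>})"

lemma finite_cos_grid: "finite (cos_grid b \<delta>)"
  by (simp add: cos_grid_def finite_PiE)

lemma cos_grid_nonempty: "cos_grid b \<delta> \<noteq> {}"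
  by (simp add: cos_grid_def PiE_eq_empty_iff)

lemma cos_grid_subset_cubeQ: "b \<ge> 0 \<Longrightarrow> cos_grid b \<delta> \<subseteq> cubeQ b"
  using cos_vector_in_cubeQ[of b "\<chi> i. \<delta> * real (_ i)"] by (auto simp: cos_grid_def)

lemma card_cos_grid_le:
  "card (cos_grid b \<delta> :: (real^'m) set) \<le> Suc (nat \<lceil>pi / \<delta>\<rceil>) ^ CARD('m)"
proof -
  have "card (cos_grid b \<delta> :: (real^'m) set)
      \<le> card (PiE (UNIV :: 'm set) (\<lambda>_. {..nat \<lceil>pi / \<delta>\<rceil>}))"
    unfolding cos_grid_def by (intro card_image_le finite_PiE) auto
  then show ?thesis by (simp add: card_PiE)
qed

lemma card_cos_grid_le_power:
  assumes "h > 0" "k \<ge> 1"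
  shows "real (card (cos_grid b (h / k) :: (real^'m) set))
    \<le> (pi / h + 2) ^ CARD('m) * k ^ CARD('m)"
proof -
  have "real (nat \<lceil>pi / (h / k)\<rceil>) = of_int \<lceil>pi / (h / k)\<rceil>"
    using assms by simp
  also have "\<dots> \<le> pi / h * k + 1"
    using of_int_ceiling_le_add_one[of "pi / (h / k)"] by simp
  finally have "real (Suc (nat \<lceil>pi / (h / k)\<rceil>)) \<le> pi / h * k + 2" by simp
  also have "\<dots> \<le> (pi / h + 2) * k" using assms by (simp add: algebra_simps)
  finally have Suc_le: "real (Suc (nat \<lceil>pi / (h / k)\<rceil>)) \<le> (pi / h + 2) * k" .
  have "real (card (cos_grid b (h / k) :: (real^'m) set))
      \<le> real (Suc (nat \<lceil>pi / (h / k)\<rceil>)) ^ CARD('m)"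
    using card_cos_grid_le[of b "h / k", where 'm = 'm] by (metis of_nat_le_iff of_nat_power)
  also have "\<dots> \<le> ((pi / h + 2) * k) ^ CARD('m)"
    by (rule power_mono[OF Suc_le]) simp
  finally show ?thesis by (simp add: power_mult_distrib)
qed

lemma cubeQ_approx_by_cos_grid:
  fixes x :: "real^'m"
  assumes "b > 0" "\<delta> > 0" "x \<in> cubeQ b"
  obtains \<theta> \<phi> where "x = (\<chi> i. b * cos (\<theta> $ i))"
    "(\<chi> i. b * cos (\<phi> $ i)) \<in> cos_grid b \<delta>"
    "\<And>i. \<bar>\<theta> $ i - \<phi> $ i\<bar> \<le> \<delta>"
proof -
  have x_div: "- 1 \<le> x $ i / b" "x $ i / b \<le> 1" for i
    using assms by (auto simp: cubeQ_def abs_le_iff divide_le_eq le_divide_eq minus_le_iff)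
  define \<theta> where "\<theta> = (\<chi> i. arccos (x $ i / b))"
  have \<theta>: "0 \<le> \<theta> $ i" "\<theta> $ i \<le> pi" for i
    using arccos_lbound[OF x_div] arccos_ubound[OF x_div] by (auto simp: \<theta>_def)
  have x_eq: "x = (\<chi> i. b * cos (\<theta> $ i))"
    using x_div \<open>b > 0\<close> by (simp add: vec_eq_iff \<theta>_def)
  define l where "l i = nat \<lfloor>\<theta> $ i / \<delta>\<rfloor>" for i
  define \<phi> where "\<phi> = (\<chi> i. \<delta> * real (l i))"
  have "l i \<le> nat \<lceil>pi / \<delta>\<rceil>" for i
    using \<theta>[of i] \<open>\<delta> > 0\<close> unfolding l_def
    by (intro nat_mono order_trans[OF floor_le_ceiling] ceiling_mono divide_right_mono) auto
  then have "(\<chi> i. b * cos (\<phi> $ i)) \<in> cos_grid b \<delta>"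
    by (auto simp: cos_grid_def \<phi>_def PiE_iff)
  moreover have "\<bar>\<theta> $ i - \<phi> $ i\<bar> \<le> \<delta>" for i
  proof -
    have "real (l i) = \<lfloor>\<theta> $ i / \<delta>\<rfloor>" using \<theta>[of i] \<open>\<delta> > 0\<close> by (simp add: l_def)
    then have "\<delta> * real (l i) \<le> \<theta> $ i" "\<theta> $ i < \<delta> * real (l i) + \<delta>"
      using floor_divide_lower[of \<delta> "\<theta> $ i"] floor_divide_upper[of \<delta> "\<theta> $ i"] \<open>\<delta> > 0\<close>
      by (simp_all add: algebra_simps)
    then show ?thesis by (simp add: \<phi>_def)
  qed
  ultimately show thesis using that x_eq by blast
qed

lemma supQ_le_Max_cos_grid:
  fixes f :: "complex^'m \<Rightarrow> complex" and K k \<delta> :: real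
  assumes "b > 0" "\<delta> > 0" "K \<ge> 0" "k \<ge> 1" and ent: "entire_fun f"
    and box: "\<And>w. \<forall>i. cmod (w $ i) \<le> 3 * b \<Longrightarrow> cmod (f w) \<le> supQ b f * exp (K * k)"
  shows "supQ b f \<le> Max ((\<lambda>x. cmod (f (cembed x))) ` cos_grid b \<delta>)
    + CARD('m) * (supQ b f * exp K * k) * \<delta>"
proof -
  define B where "B = Max ((\<lambda>x. cmod (f (cembed x))) ` cos_grid b \<delta>)
    + CARD('m) * (supQ b f * exp K * k) * \<delta>"
  have "cmod (f (cembed x)) \<le> B" if x_cube: "x \<in> cubeQ b" for x
  proof -
    obtain \<theta> \<phi> where x: "x = (\<chi> i. b * cos (\<theta> $ i))"
      and grid: "(\<chi> i. b * cos (\<phi> $ i)) \<in> cos_grid b \<delta>"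
      and close: "\<And>i. \<bar>\<theta> $ i - \<phi> $ i\<bar> \<le> \<delta>"
      using cubeQ_approx_by_cos_grid[OF \<open>b > 0\<close> \<open>\<delta> > 0\<close> x_cube] by blast
    have "norm (cos_pullback b f \<theta> - cos_pullback b f \<phi>)
        \<le> CARD('m) * (supQ b f * exp K * k) * \<delta>"
      using cos_pullback_coordinate_Lipschitz[OF assms(1) ent assms(3,4) norm_le_supQ[OF ent] box]
        supQ_nonneg[OF ent] \<open>b > 0\<close> \<open>k \<ge> 1\<close>
      by (intro norm_diff_le_of_coordinatewise_Lipschitz close) auto
    moreover have "cmod (cos_pullback b f \<phi>)
        \<le> Max ((\<lambda>x. cmod (f (cembed x))) ` cos_grid b \<delta>)"
      using grid by (auto simp: cos_pullback_def intro!: Max_ge finite_cos_grid)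
    ultimately show ?thesis
      using norm_triangle_ineq2[of "cos_pullback b f \<theta>" "cos_pullback b f \<phi>"]
      by (simp add: B_def x cos_pullback_def)
  qed
  moreover have "cubeQ b \<noteq> {}" using cos_vector_in_cubeQ[of b] \<open>b > 0\<close> by auto
  ultimately have "supQ b f \<le> B" unfolding supQ_def by (intro cSup_least) auto
  then show ?thesis by (simp add: B_def)
qed

lemma growth_factor_on_box_le:
  fixes w :: "complex^'m" and b \<tau> k M A c :: real
  assumes "b > 0" "\<tau> > 0" "k \<ge> 0" "M \<ge> 0" "0 \<le> A" "A \<le> exp (c * k)"
    and box: "\<forall>i. cmod (w $ i) \<le> 3 * b"
  shows "A * M * exp (k / (CARD('m) * b * \<tau>) * (\<Sum>j\<in>UNIV. cmod (w $ j)))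
    \<le> M * exp ((c + 3 / \<tau>) * k)"
proof -
  have "(\<Sum>j\<in>UNIV. cmod (w $ j)) \<le> CARD('m) * (3 * b)"
    using sum_bounded_above[of UNIV "\<lambda>j. cmod (w $ j)" "3 * b"] box by simp
  then have "k / (CARD('m) * b * \<tau>) * (\<Sum>j\<in>UNIV. cmod (w $ j))
      \<le> k / (CARD('m) * b * \<tau>) * (CARD('m) * (3 * b))"
    using assms by (intro mult_left_mono) auto
  also have "\<dots> = 3 * k / \<tau>" using assms by (simp add: field_simps)
  finally have "A * M * exp (k / (CARD('m) * b * \<tau>) * (\<Sum>j\<in>UNIV. cmod (w $ j)))
      \<le> exp (c * k) * M * exp (3 * k / \<tau>)"
    using assms by (intro mult_mono) auto
  also have "\<dots> = M * exp ((c + 3 / \<tau>) * k)" by (simp add: field_simps flip: exp_add)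
  finally show ?thesis .
qed

lemma eventually_le_exp_of_tendsto_0:
  fixes a x :: "nat \<Rightarrow> real"
  assumes "(\<lambda>N. a N * exp (x N * p)) \<longlonglongrightarrow> 0" and "\<And>N. x N \<ge> 0"
  shows "eventually (\<lambda>N. a N \<le> exp (\<bar>p\<bar> * x N)) sequentially"
  using order_tendstoD(2)[OF assms(1), of 1]
proof (rule eventually_mono)
  fix N assume "a N * exp (x N * p) < 1"
  then have "a N \<le> exp (- (x N * p))" by (simp add: exp_minus field_simps)
  also have "\<dots> \<le> exp (\<bar>p\<bar> * x N)"
    using mult_right_mono[OF abs_ge_minus_self[of p] assms(2)[of N]] by (simp add: algebra_simps)
  finally show "a N \<le> exp (\<bar>p\<bar> * x N)" .
qed simp

lemma sampling_set_exists:
  fixes b \<tau> \<gamma> c A :: real and k :: nat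
  assumes "b > 0" "\<tau> > 0" "\<gamma> > 0" "c \<ge> 0" "k \<ge> 1" "0 \<le> A" "A \<le> exp (c * k)"
  defines "h \<equiv> \<gamma> / (1 + \<gamma>) / (CARD('m) * exp (c + 3 / \<tau>))"
  shows "\<exists>X :: (real^'m) set. finite X \<and> X \<noteq> {} \<and> X \<subseteq> cubeQ b \<and>
     real (card X) \<le> (pi / h + 2) ^ CARD('m) * real k ^ CARD('m) \<and>
     (\<forall>f :: complex^'m \<Rightarrow> complex. entire_fun f \<and>
        (\<forall>w. cmod (f w) \<le> A * supQ b f *
           exp (real k / (real CARD('m) * b * \<tau>) * (\<Sum>j\<in>UNIV. cmod (w $ j))))
        \<longrightarrow> supQ b f \<le> (1 + \<gamma>) * Max ((\<lambda>x. cmod (f (cembed x))) ` X))"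
proof (intro exI[of _ "cos_grid b (h / k)"] conjI allI impI finite_cos_grid cos_grid_nonempty)
  have "h > 0" using assms by (simp add: h_def)
  then show "real (card (cos_grid b (h / k) :: (real^'m) set))
      \<le> (pi / h + 2) ^ CARD('m) * real k ^ CARD('m)"
    using \<open>k \<ge> 1\<close> by (intro card_cos_grid_le_power) auto
  show "cos_grid b (h / k) \<subseteq> cubeQ b" using \<open>b > 0\<close> by (simp add: cos_grid_subset_cubeQ)
  fix f :: "complex^'m \<Rightarrow> complex"
  assume f: "entire_fun f \<and> (\<forall>w. cmod (f w) \<le> A * supQ b f *
    exp (real k / (real CARD('m) * b * \<tau>) * (\<Sum>j\<in>UNIV. cmod (w $ j))))"
  have "supQ b f \<ge> 0" using f \<open>b > 0\<close> by (simp add: supQ_nonneg)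
  have box: "cmod (f w) \<le> supQ b f * exp ((c + 3 / \<tau>) * k)"
    if "\<forall>i. cmod (w $ i) \<le> 3 * b" for w
    using f growth_factor_on_box_le[OF \<open>b > 0\<close> \<open>\<tau> > 0\<close> _ \<open>supQ b f \<ge> 0\<close> assms(6,7) that]
    by (meson of_nat_0_le_iff order_trans)
  have "supQ b f \<le> Max ((\<lambda>x. cmod (f (cembed x))) ` cos_grid b (h / k))
      + CARD('m) * (supQ b f * exp (c + 3 / \<tau>) * k) * (h / k)"
    using assms \<open>h > 0\<close> f box by (intro supQ_le_Max_cos_grid) auto
  also have "CARD('m) * (supQ b f * exp (c + 3 / \<tau>) * k) * (h / k)
      = supQ b f * (CARD('m) * exp (c + 3 / \<tau>) * h)"
    using \<open>k \<ge> 1\<close> by (simp add: field_simps)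
  also have "CARD('m) * exp (c + 3 / \<tau>) * h = \<gamma> / (1 + \<gamma>)"
    by (simp add: h_def)
  finally show "supQ b f \<le> (1 + \<gamma>) * Max ((\<lambda>x. cmod (f (cembed x))) ` cos_grid b (h / k))"
    using \<open>\<gamma> > 0\<close> by (simp add: field_simps)
qed

theorem theoremT1p3:
  fixes b \<tau> :: real and n :: "nat \<Rightarrow> nat" and D :: "nat \<Rightarrow> real"
  assumes "b > 0" and "\<tau> > gamma0"
    and "strict_mono n" and "\<And>N. n N > 0"
    and "\<And>N. D (n N) > 0"
    and "(\<lambda>N. D (n N) * exp (real (n N) * psi \<tau>)) \<longlonglongrightarrow> 0"
  shows "\<forall>\<gamma>>0. \<exists>C n0. \<forall>k \<in> range n. k \<ge> n0 \<longrightarrow>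
     (\<exists>X :: (real^'m) set. finite X \<and> X \<noteq> {} \<and> X \<subseteq> cubeQ b \<and>
        real (card X) \<le> C * real k ^ CARD('m) \<and>
        (\<forall>f :: complex^'m \<Rightarrow> complex. entire_fun f \<and>
           (\<forall>w. cmod (f w) \<le> D k * supQ b f *
              exp (real k / (real CARD('m) * b * \<tau>) * (\<Sum>j\<in>UNIV. cmod (w $ j))))
           \<longrightarrow> supQ b f \<le> (1 + \<gamma>) * Max ((\<lambda>x. cmod (f (cembed x))) ` X)))"
proof -
  have "\<tau> > 0" using gamma0_pos assms(2) by linarith
  obtain N0 where D_le: "\<And>N. N \<ge> N0 \<Longrightarrow> D (n N) \<le> exp (\<bar>psi \<tau>\<bar> * n N)"
    using eventually_le_exp_of_tendsto_0[OF assms(6)] by (auto simp: eventually_sequentially)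
  have admissible: "1 \<le> k \<and> 0 \<le> D k \<and> D k \<le> exp (\<bar>psi \<tau>\<bar> * k)"
    if "k \<in> range n" "n N0 \<le> k" for k
  proof -
    from that(1) obtain N where "k = n N" by blast
    with that(2) have "N \<ge> N0" using strict_mono_less_eq[OF assms(3)] by simp
    then show ?thesis
      using \<open>k = n N\<close> assms(4,5)[of N] D_le[of N] by (simp add: Suc_le_eq less_imp_le)
  qed
  show ?thesis (is "\<forall>\<gamma>>0. \<exists>C n0. \<forall>k \<in> range n. n0 \<le> k \<longrightarrow> ?sampling \<gamma> C k")
  proof (intro allI impI)
    fix \<gamma> :: real assume "\<gamma> > 0"
    define h where "h = \<gamma> / (1 + \<gamma>) / (CARD('m) * exp (\<bar>psi \<tau>\<bar> + 3 / \<tau>))"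
    show "\<exists>C n0. \<forall>k \<in> range n. n0 \<le> k \<longrightarrow> ?sampling \<gamma> C k"
    proof (intro exI[of _ "(pi / h + 2) ^ CARD('m)"] exI[of _ "n N0"] ballI impI)
      fix k assume "k \<in> range n" "n N0 \<le> k"
      then have "1 \<le> k" "0 \<le> D k" "D k \<le> exp (\<bar>psi \<tau>\<bar> * real k)"
        using admissible by auto
      from sampling_set_exists[OF assms(1) \<open>\<tau> > 0\<close> \<open>\<gamma> > 0\<close> abs_ge_zero this]
      show "?sampling \<gamma> ((pi / h + 2) ^ CARD('m)) k" unfolding h_def .
    qed
  qed
qed

end
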